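(* Let $D=2$, $C/2<K<C$, $U=rC$ and $\bar a=rK$ for some positive integer $r$, and let all user and creator types be drawn i.i.d. from the uniform distribution on $\{x\in\mathbb R^2_{\ge0}:\|x\|_2=1\}$, with creators indexed $1,\dots,C$ in increasing order of the angle of their type. Then the set of creators that stay after $t=0$ under the user-centric recommendation $UC_0$ (i.e. $\mathcal C_1$) is of the form $\{i,i+1,\dots,j\}$ for some $i,j\in[1,C]$, and $j-i+1\le K$; that is, at most $K$ creators stay.
   Context: Users $\mathcal U_0=\{1,\dots,U\}$, creators $\mathcal C_0=\{1,\dots,C\}$. At $t=0$ the user-centric recommendation assigns each user $i$ the set $UC_0(i)\in\arg\max_{S\subseteq\mathcal C_0,|S|\le K}\sum_{j\in S}u_i^Tc_j$. Creator $j$ stays after $t=0$ if $|\{i\in\mathcal U_0:j\in UC_0(i)\}|\ge\bar a$. *)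

theory Defs
  imports "HOL-Probability.Probability"
begin

text \<open>The uniform (arc-length) distribution on the quarter circle
  {x \<in> R^2_{\<ge>0}. norm x = 1} is the image of the uniform distribution of the
  angle on [0, pi/2] under t \<mapsto> (cos t, sin t).\<close>

definition arc_unif :: "(real \<times> real) measure" where
  "arc_unif = distr (uniform_measure lborel {0..pi/2}) borel (\<lambda>t. (cos t, sin t))"

definition type_angle :: "real \<times> real \<Rightarrow> real" where
  "type_angle x = arccos (fst x)"

definition is_UC0 ::
  "nat \<Rightarrow> nat \<Rightarrow> nat \<Rightarrow> (nat \<Rightarrow> real \<times> real) \<Rightarrow> (nat \<Rightarrow> real \<times> real) \<Rightarrow> (nat \<Rightarrow> nat set) \<Rightarrow> bool"
where
  "is_UC0 U C K u c UC \<longleftrightarrow>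
     (\<forall>i\<in>{1..U}. UC i \<subseteq> {1..C} \<and> card (UC i) \<le> K \<and>
        (\<forall>S. S \<subseteq> {1..C} \<and> card S \<le> K \<longrightarrow>
           (\<Sum>j\<in>S. inner (u i) (c j)) \<le> (\<Sum>j\<in>UC i. inner (u i) (c j))))"

definition stay_set :: "nat \<Rightarrow> nat \<Rightarrow> nat \<Rightarrow> (nat \<Rightarrow> nat set) \<Rightarrow> nat set" where
  "stay_set U C abar UC = {j \<in> {1..C}. abar \<le> card {i \<in> {1..U}. j \<in> UC i}}"

end

theory Submission imports Defs begin

text \<open>Almost surely every type lies strictly inside the quarter circle, so the
  affinity of a user at angle t to a creator at angle s is cos (t - s): positive and
  strictly quasiconcave in s. An optimal set of K creators for one user is therefore
  a window of K creators consecutive in angle. As 2 K > C, two windows cannot lie on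
  opposite sides of a creator, so for creators k1 < k2 < k3 either every window
  containing k1 or every window containing k3 also contains k2. Hence the number of
  users receiving a creator is quasiconcave along the angular order, and the
  creators reaching the threshold r K form an interval. No window contains two
  creators K apart, so two such creators would be received by at least
  2 r K > r C = U users in total, which is impossible.\<close>

definition order_convex :: "'a::order set \<Rightarrow> bool" where
  "order_convex A \<longleftrightarrow> (\<forall>a\<in>A. \<forall>c\<in>A. {a..c} \<subseteq> A)"

definition strictly_quasiconcave_on :: "'a::order set \<Rightarrow> ('a \<Rightarrow> 'b::linorder) \<Rightarrow> bool" where
  "strictly_quasiconcave_on S g \<longleftrightarrow>
     (\<forall>a\<in>S. \<forall>b\<in>S. \<forall>c\<in>S. a < b \<and> b < c \<longrightarrow> min (g a) (g c) < g b)"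

definition max_weight_subset :: "('a \<Rightarrow> real) \<Rightarrow> 'a set \<Rightarrow> nat \<Rightarrow> 'a set \<Rightarrow> bool" where
  "max_weight_subset g S K W \<longleftrightarrow>
     W \<subseteq> S \<and> card W \<le> K \<and> (\<forall>T. T \<subseteq> S \<and> card T \<le> K \<longrightarrow> sum g T \<le> sum g W)"

definition open_quarter_circle :: "(real \<times> real) set" where
  "open_quarter_circle = {x. 0 < fst x \<and> 0 < snd x \<and> norm x = 1}"

lemma is_UC0_iff_max_weight_subset:
  "is_UC0 U C K u c UC \<longleftrightarrow>
     (\<forall>i\<in>{1..U}. max_weight_subset (\<lambda>j. inner (u i) (c j)) {1..C} K (UC i))"
  unfolding is_UC0_def max_weight_subset_def by blast

subsection \<open>Order-convex sets\<close>

lemma order_convex_atLeastAtMost: "order_convex {a..b}"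
  unfolding order_convex_def by auto

lemma order_convex_subset_lessThan:
  fixes A :: "'a::linorder set"
  assumes "order_convex A" "a \<in> A" "b \<notin> A" "a < b"
  shows "A \<subseteq> {..<b}"
proof
  fix x assume "x \<in> A"
  then have "b \<notin> {a..x}" using assms unfolding order_convex_def by blast
  then show "x \<in> {..<b}" using \<open>a < b\<close> by auto
qed

lemma order_convex_subset_greaterThan:
  fixes A :: "'a::linorder set"
  assumes "order_convex A" "c \<in> A" "b \<notin> A" "b < c"
  shows "A \<subseteq> {b<..}"
proof
  fix x assume "x \<in> A"
  then have "b \<notin> {x..c}" using assms unfolding order_convex_def by blast
  then show "x \<in> {b<..}" using \<open>b < c\<close> by auto
qed

lemma order_convex_eq_Min_Max:
  fixes A :: "'a::linorder set"
  assumes "finite A" "A \<noteq> {}" "order_convex A"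
  shows "A = {Min A..Max A}"
proof
  show "A \<subseteq> {Min A..Max A}" using assms by (auto intro: Min_le Max_ge)
  show "{Min A..Max A} \<subseteq> A" using assms unfolding order_convex_def by (meson Min_in Max_in)
qed

lemma order_convex_card_gt:
  fixes A :: "nat set"
  assumes "finite A" "order_convex A" "k \<in> A" "k + n \<in> A"
  shows "n < card A"
proof -
  have "card {k..k + n} \<le> card A"
    using assms unfolding order_convex_def by (intro card_mono) auto
  then show ?thesis by simp
qed

subsection \<open>Optimal subsets for a quasiconcave weight\<close>

lemma max_weight_subset_reindex:
  assumes \<sigma>: "bij_betw \<sigma> A S" and W: "max_weight_subset g S K W"
  shows "max_weight_subset (g \<circ> \<sigma>) A K {k \<in> A. \<sigma> k \<in> W}"
proof -
  let ?W = "{k \<in> A. \<sigma> k \<in> W}"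
  have inj: "inj_on \<sigma> T" if "T \<subseteq> A" for T
    using \<sigma> that by (auto simp: bij_betw_def intro: inj_on_subset)
  have "\<sigma> ` ?W = W"
    using \<sigma> W unfolding max_weight_subset_def bij_betw_def by blast
  then have card_W: "card ?W = card W" and sum_W: "sum (g \<circ> \<sigma>) ?W = sum g W"
    using inj[of ?W] card_image[of \<sigma> ?W] sum.reindex[of \<sigma> ?W g] by auto
  have "sum (g \<circ> \<sigma>) T \<le> sum g W" if T: "T \<subseteq> A" "card T \<le> K" for T
  proof -
    have "sum (g \<circ> \<sigma>) T = sum g (\<sigma> ` T)"
      using inj[OF T(1)] by (simp add: sum.reindex)
    also have "\<dots> \<le> sum g W"
    proof -
      have "\<sigma> ` T \<subseteq> S" "card (\<sigma> ` T) \<le> K"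
        using T \<sigma> inj[OF T(1)] by (auto simp: card_image bij_betw_def)
      then show ?thesis using W unfolding max_weight_subset_def by blast
    qed
    finally show ?thesis .
  qed
  then show ?thesis
    using W card_W sum_W unfolding max_weight_subset_def by auto
qed

lemma max_weight_subset_cong:
  assumes "\<And>k. k \<in> S \<Longrightarrow> g k = h k"
  shows "max_weight_subset g S K W \<longleftrightarrow> max_weight_subset h S K W"
proof -
  have "sum g T = sum h T" if "T \<subseteq> S" for T
    using assms that by (intro sum.cong) auto
  then show ?thesis
    unfolding max_weight_subset_def by auto
qed

lemma max_weight_subset_card:
  assumes "finite S" "K \<le> card S" "\<And>k. k \<in> S \<Longrightarrow> 0 < g k"
    and W: "max_weight_subset g S K W"
  shows "card W = K"
proof (rule ccontr)
  assume "card W \<noteq> K"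
  with W have less: "card W < K" unfolding max_weight_subset_def by simp
  have fin: "finite W" using W \<open>finite S\<close> unfolding max_weight_subset_def by (auto intro: finite_subset)
  have "W \<noteq> S" using less \<open>K \<le> card S\<close> by auto
  then obtain k where k: "k \<in> S" "k \<notin> W"
    using W unfolding max_weight_subset_def by blast
  have "insert k W \<subseteq> S" "card (insert k W) \<le> K"
    using W k less fin unfolding max_weight_subset_def by (auto simp: card_insert_if)
  with W have "sum g (insert k W) \<le> sum g W" unfolding max_weight_subset_def by blast
  with k fin assms(3)[of k] show False by simp
qed

lemma max_weight_subset_order_convex:
  fixes S :: "'a::linorder set"
  assumes "finite S" "order_convex S" "strictly_quasiconcave_on S g"
    and W: "max_weight_subset g S K W"
  shows "order_convex W"
  unfolding order_convex_def
proof (intro ballI subsetI)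
  fix a c b assume a: "a \<in> W" and c: "c \<in> W" and b: "b \<in> {a..c}"
  show "b \<in> W"
  proof (rule ccontr)
    assume b_notin: "b \<notin> W"
    have WS: "W \<subseteq> S" and fin: "finite W"
      using W \<open>finite S\<close> unfolding max_weight_subset_def by (auto intro: finite_subset)
    have "b \<in> S"
      using a b c WS \<open>order_convex S\<close> unfolding order_convex_def by blast
    have "a < b" "b < c"
      using a b c b_notin by (auto simp: le_less)
    then have "min (g a) (g c) < g b"
      using \<open>strictly_quasiconcave_on S g\<close> a c \<open>b \<in> S\<close> WS unfolding strictly_quasiconcave_on_def by blast
    then obtain x where x: "x \<in> W" "g x < g b"
      using a c min_less_iff_disj by metis
    \<comment> \<open>exchanging x for b keeps the cardinality and increases the weight\<close>
    define T where "T = insert b (W - {x})"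
    have "card T = Suc (card (W - {x}))"
      using fin b_notin unfolding T_def by simp
    also have "\<dots> = card W"
      by (rule card_Suc_Diff1[OF fin x(1)])
    finally have "card T \<le> K"
      using W unfolding max_weight_subset_def by simp
    moreover have "T \<subseteq> S"
      using WS \<open>b \<in> S\<close> unfolding T_def by blast
    ultimately have "sum g T \<le> sum g W"
      using W unfolding max_weight_subset_def by blast
    moreover have "sum g T = g b + (sum g W - g x)"
      using fin x b_notin unfolding T_def by (simp add: sum_diff1)
    ultimately show False using x by simp
  qed
qed

lemma strictly_quasiconcave_on_comp_strict_mono:
  assumes "strictly_quasiconcave_on T g" "strict_mono_on S h" "h ` S \<subseteq> T"
  shows "strictly_quasiconcave_on S (g \<circ> h)"
  using assms unfolding strictly_quasiconcave_on_def strict_mono_on_def by (simp add: image_subset_iff)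

subsection \<open>Counting order-convex windows\<close>

lemma order_convex_superlevel_count:
  fixes W :: "'i \<Rightarrow> 'a::linorder set"
  assumes "finite I" "finite S" "order_convex S"
    and W: "\<And>i. i \<in> I \<Longrightarrow> W i \<subseteq> S \<and> order_convex (W i) \<and> card S < 2 * card (W i)"
  shows "order_convex {k \<in> S. m \<le> card {i \<in> I. k \<in> W i}}"
  unfolding order_convex_def
proof (intro ballI subsetI)
  fix k1 k3 k2
  assume k1: "k1 \<in> {k \<in> S. m \<le> card {i \<in> I. k \<in> W i}}"
    and k3: "k3 \<in> {k \<in> S. m \<le> card {i \<in> I. k \<in> W i}}" and k2: "k2 \<in> {k1..k3}"
  have "k2 \<in> S" using k1 k3 k2 \<open>order_convex S\<close> unfolding order_convex_def by blast
  \<comment> \<open>two windows avoiding k2 on opposite sides would be disjoint, but each has more than half of S\<close>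
  have "{i \<in> I. k1 \<in> W i} \<subseteq> {i \<in> I. k2 \<in> W i} \<or> {i \<in> I. k3 \<in> W i} \<subseteq> {i \<in> I. k2 \<in> W i}"
  proof (rule ccontr)
    assume "\<not> ?thesis"
    then obtain i j where i: "i \<in> I" "k1 \<in> W i" "k2 \<notin> W i" and j: "j \<in> I" "k3 \<in> W j" "k2 \<notin> W j"
      by blast
    then have "k1 < k2" "k2 < k3" using k2 by (auto simp: le_less)
    then have "W i \<subseteq> {..<k2}" "W j \<subseteq> {k2<..}"
      using W i j order_convex_subset_lessThan[of "W i" k1 k2]
        order_convex_subset_greaterThan[of "W j" k3 k2] by blast+
    then have "W i \<inter> W j = {}" by fastforce
    moreover have "finite (W i)" "finite (W j)"
      using W i j \<open>finite S\<close> by (meson finite_subset)+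
    ultimately have "card (W i) + card (W j) = card (W i \<union> W j)"
      by (simp add: card_Un_disjoint)
    also have "\<dots> \<le> card S"
      using W i j \<open>finite S\<close> by (intro card_mono) auto
    finally show False using W[OF \<open>i \<in> I\<close>] W[OF \<open>j \<in> I\<close>] by linarith
  qed
  then have "card {i \<in> I. k1 \<in> W i} \<le> card {i \<in> I. k2 \<in> W i} \<or>
      card {i \<in> I. k3 \<in> W i} \<le> card {i \<in> I. k2 \<in> W i}"
    using \<open>finite I\<close> by (auto intro: card_mono)
  then show "k2 \<in> {k \<in> S. m \<le> card {i \<in> I. k \<in> W i}}"
    using k1 k3 \<open>k2 \<in> S\<close> by auto
qed

lemma superlevel_count_gap:
  fixes W :: "'i \<Rightarrow> nat set"
  assumes "finite I" "card I < 2 * m"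
    and W: "\<And>i. i \<in> I \<Longrightarrow> finite (W i) \<and> order_convex (W i) \<and> card (W i) \<le> n"
  shows "\<not> (m \<le> card {i \<in> I. k \<in> W i} \<and> m \<le> card {i \<in> I. k + n \<in> W i})"
proof
  assume superlevel: "m \<le> card {i \<in> I. k \<in> W i} \<and> m \<le> card {i \<in> I. k + n \<in> W i}"
  have "\<not> (k \<in> W i \<and> k + n \<in> W i)" if "i \<in> I" for i
    using W[OF that] order_convex_card_gt[of "W i" k n] by auto
  then have "{i \<in> I. k \<in> W i} \<inter> {i \<in> I. k + n \<in> W i} = {}"
    by blast
  then have "card {i \<in> I. k \<in> W i} + card {i \<in> I. k + n \<in> W i}
      = card ({i \<in> I. k \<in> W i} \<union> {i \<in> I. k + n \<in> W i})"
    using \<open>finite I\<close> by (simp add: card_Un_disjoint)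
  also have "\<dots> \<le> card I"
    using \<open>finite I\<close> by (intro card_mono) auto
  finally show False using superlevel \<open>card I < 2 * m\<close> by linarith
qed

lemma superlevel_count_interval:
  fixes W :: "'i \<Rightarrow> nat set"
  assumes "finite I" "K < C" "C < 2 * K" "card I < 2 * m"
    and W: "\<And>i. i \<in> I \<Longrightarrow> W i \<subseteq> {1..C} \<and> order_convex (W i) \<and> card (W i) = K"
  shows "\<exists>i\<in>{1..C}. \<exists>j\<in>{1..C}. {k \<in> {1..C}. m \<le> card {i \<in> I. k \<in> W i}} = {i..j} \<and> j + 1 - i \<le> K"
proof -
  define T where "T = {k \<in> {1..C}. m \<le> card {i \<in> I. k \<in> W i}}"
  have "order_convex T"
    unfolding T_def using assms by (intro order_convex_superlevel_count order_convex_atLeastAtMost) auto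
  have gap: "k \<in> T \<Longrightarrow> k + K \<notin> T" for k
    using superlevel_count_gap[of I m W K k] assms finite_subset unfolding T_def by blast
  show ?thesis
  proof (cases "T = {}")
    case True
    then show ?thesis
      unfolding T_def[symmetric] using assms by (intro bexI[of _ C] bexI[of _ 1]) auto
  next
    case False
    have fin: "finite T" unfolding T_def by simp
    then have T: "T = {Min T..Max T}"
      using False \<open>order_convex T\<close> by (rule order_convex_eq_Min_Max)
    have "Min T \<in> T" "Max T \<in> T"
      using False fin by (auto intro: Min_in Max_in)
    have "Max T < Min T + K"
    proof (rule ccontr)
      assume "\<not> Max T < Min T + K"
      then have "Min T + K \<in> {Min T..Max T}" by simp
      then show False using gap[OF \<open>Min T \<in> T\<close>] T by blast
    qed
    then have "Max T + 1 - Min T \<le> K" by linarith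
    moreover have "Min T \<in> {1..C}" "Max T \<in> {1..C}"
      using \<open>Min T \<in> T\<close> \<open>Max T \<in> T\<close> unfolding T_def by auto
    ultimately show ?thesis
      unfolding T_def[symmetric] using T by blast
  qed
qed

subsection \<open>Types on the quarter circle\<close>

lemma prob_space_arc_unif: "prob_space arc_unif"
  unfolding arc_unif_def
  by (intro prob_space.prob_space_distr prob_space_uniform_measure) (auto simp: pi_gt_zero)

lemma sets_arc_unif: "sets arc_unif = sets borel"
  unfolding arc_unif_def by simp

lemma open_quarter_circle_borel [measurable]: "open_quarter_circle \<in> sets borel"
proof -
  have "open {x :: real \<times> real. 0 < fst x \<and> 0 < snd x}"
    by (intro open_Collect_conj open_Collect_less continuous_intros)
  moreover have "closed {x :: real \<times> real. norm x = 1}"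
    by (intro closed_Collect_eq continuous_intros)
  ultimately have "{x :: real \<times> real. 0 < fst x \<and> 0 < snd x} \<inter> {x. norm x = 1} \<in> sets borel"
    by (rule sets.Int[OF borel_open borel_closed])
  also have "{x. 0 < fst x \<and> 0 < snd x} \<inter> {x. norm x = 1} = open_quarter_circle"
    unfolding open_quarter_circle_def by auto
  finally show ?thesis .
qed

lemma AE_arc_unif_open_quarter_circle: "AE x in arc_unif. x \<in> open_quarter_circle"
proof -
  have "AE t in uniform_measure lborel {0..pi/2}. (cos t, sin t) \<in> open_quarter_circle"
  proof (rule AE_uniform_measureI)
    show "AE t in lborel. t \<in> {0..pi/2} \<longrightarrow> (cos t, sin t) \<in> open_quarter_circle"
      using AE_lborel_singleton[of 0] AE_lborel_singleton[of "pi/2"]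
    proof eventually_elim
      case (elim t)
      show ?case
      proof
        assume "t \<in> {0..pi/2}"
        with elim have "0 < t" "t < pi/2" by auto
        then have "0 < cos t" "0 < sin t"
          by (auto intro: cos_gt_zero sin_gt_zero)
        then show "(cos t, sin t) \<in> open_quarter_circle"
          by (simp add: open_quarter_circle_def norm_Pair real_norm_def)
      qed
    qed
  qed simp
  then show ?thesis
    unfolding arc_unif_def by (subst AE_distr_iff) auto
qed

lemma AE_pair_measure_conj:
  assumes "sigma_finite_measure M" "sigma_finite_measure N"
    and [measurable]: "Measurable.pred M P" "Measurable.pred N Q"
    and "AE x in M. P x" "AE y in N. Q y"
  shows "AE z in M \<Otimes>\<^sub>M N. P (fst z) \<and> Q (snd z)"
proof -
  interpret pair_sigma_finite M N
    using assms(1,2) by (simp add: pair_sigma_finite_def)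
  show ?thesis
  proof (rule AE_pair_measure)
    show "{z \<in> space (M \<Otimes>\<^sub>M N). P (fst z) \<and> Q (snd z)} \<in> sets (M \<Otimes>\<^sub>M N)"
      by measurable
    show "AE x in M. AE y in N. P (fst (x, y)) \<and> Q (snd (x, y))"
      using assms(5,6) by (auto elim!: eventually_mono)
  qed
qed

lemma AE_PiM_arc_unif_open_quarter_circle:
  assumes "finite I"
  shows "AE x in PiM I (\<lambda>_. arc_unif). \<forall>i\<in>I. x i \<in> open_quarter_circle"
  using assms prob_space_arc_unif AE_arc_unif_open_quarter_circle
  by (intro AE_finite_allI AE_PiM_component) auto

lemma AE_types_open_quarter_circle:
  assumes "finite I" "finite J"
  shows "AE \<omega> in PiM I (\<lambda>_. arc_unif) \<Otimes>\<^sub>M PiM J (\<lambda>_. arc_unif).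
    (\<forall>i\<in>I. fst \<omega> i \<in> open_quarter_circle) \<and> (\<forall>j\<in>J. snd \<omega> j \<in> open_quarter_circle)"
proof (rule AE_pair_measure_conj)
  show "sigma_finite_measure (PiM I (\<lambda>_. arc_unif))" "sigma_finite_measure (PiM J (\<lambda>_. arc_unif))"
    by (intro prob_space_imp_sigma_finite prob_space_PiM prob_space_arc_unif)+
  show "Measurable.pred (PiM I (\<lambda>_. arc_unif)) (\<lambda>x. \<forall>i\<in>I. x i \<in> open_quarter_circle)"
    "Measurable.pred (PiM J (\<lambda>_. arc_unif)) (\<lambda>x. \<forall>j\<in>J. x j \<in> open_quarter_circle)"
    using assms open_quarter_circle_borel
    by (intro pred_intros_finite pred_sets2[where N = arc_unif] measurable_component_singleton;
        simp add: sets_arc_unif)+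
  show "AE x in PiM I (\<lambda>_. arc_unif). \<forall>i\<in>I. x i \<in> open_quarter_circle"
    using AE_PiM_arc_unif_open_quarter_circle[OF assms(1)] .
  show "AE y in PiM J (\<lambda>_. arc_unif). \<forall>j\<in>J. y j \<in> open_quarter_circle"
    using AE_PiM_arc_unif_open_quarter_circle[OF assms(2)] .
qed

lemma type_angle_open_quarter_circle:
  assumes "x \<in> open_quarter_circle"
  shows "type_angle x \<in> {0<..<pi/2}" "x = (cos (type_angle x), sin (type_angle x))"
proof -
  obtain a b where x: "x = (a, b)" by (cases x)
  have ab: "0 < a" "0 < b" "a\<^sup>2 + b\<^sup>2 = 1"
    using assms x by (auto simp: open_quarter_circle_def norm_Pair real_norm_def)
  moreover have "0 < b\<^sup>2" using ab by simp
  ultimately have "a\<^sup>2 < 1" by linarith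
  then have "\<bar>a\<bar> < 1"
    by (simp add: abs_square_less_1)
  then have a: "-1 < a" "a < 1" by auto
  have "1 - a\<^sup>2 = b\<^sup>2" using ab by simp
  have "cos (arccos a) = a" "sin (arccos a) = sqrt (1 - a\<^sup>2)"
    using a by (simp_all add: cos_arccos sin_arccos)
  moreover have "sqrt (1 - a\<^sup>2) = b"
    unfolding \<open>1 - a\<^sup>2 = b\<^sup>2\<close> using ab by simp
  moreover have "0 < arccos a" using arccos_lt_bounded[OF a] by simp
  moreover have "arccos a < pi/2" using arccos_less_arccos[of 0 a] a ab by simp
  ultimately show "type_angle x \<in> {0<..<pi/2}" "x = (cos (type_angle x), sin (type_angle x))"
    using x by (auto simp: type_angle_def)
qed

lemma inner_eq_cos_type_angle:
  assumes "x \<in> open_quarter_circle" "y \<in> open_quarter_circle"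
  shows "inner x y = cos (type_angle x - type_angle y)"
  using type_angle_open_quarter_circle(2)[OF assms(1)] type_angle_open_quarter_circle(2)[OF assms(2)]
  by (metis cos_diff fst_conv inner_Pair inner_real_def snd_conv)

lemma strictly_quasiconcave_on_cos_diff:
  "strictly_quasiconcave_on {t - pi..t + pi} (\<lambda>s. cos (t - s))"
  unfolding strictly_quasiconcave_on_def
proof (intro ballI impI)
  fix s1 s2 s3 assume s: "s1 \<in> {t - pi..t + pi}" "s3 \<in> {t - pi..t + pi}" "s1 < s2 \<and> s2 < s3"
  show "min (cos (t - s1)) (cos (t - s3)) < cos (t - s2)"
  proof (cases "t \<le> s2")
    case True
    then have "cos (s3 - t) < cos (s2 - t)"
      using s by (intro cos_monotone_0_pi) auto
    then show ?thesis by (simp add: min_def cos_diff mult.commute)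
  next
    case False
    then have "cos (t - s1) < cos (t - s2)"
      using s by (intro cos_monotone_0_pi) auto
    then show ?thesis by (simp add: min_def)
  qed
qed

lemma order_convex_recommendation:
  fixes A :: "'a::linorder set"
  assumes "finite A" "order_convex A" "bij_betw \<sigma> A S"
    and "u \<in> open_quarter_circle" "c ` S \<subseteq> open_quarter_circle"
    and "strict_mono_on A (\<lambda>k. type_angle (c (\<sigma> k)))"
    and R: "max_weight_subset (\<lambda>j. inner u (c j)) S K R" and "K \<le> card A"
  shows "order_convex {k \<in> A. \<sigma> k \<in> R} \<and> card {k \<in> A. \<sigma> k \<in> R} = K"
proof -
  define g where "g k = cos (type_angle u - type_angle (c (\<sigma> k)))" for k
  have c: "c (\<sigma> k) \<in> open_quarter_circle" if "k \<in> A" for k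
    using assms(3,5) that by (auto dest: bij_betwE)
  have c_angle: "type_angle (c (\<sigma> k)) \<in> {0<..<pi/2}" if "k \<in> A" for k
    using type_angle_open_quarter_circle(1)[OF c[OF that]] .
  have u: "type_angle u \<in> {0<..<pi/2}"
    using type_angle_open_quarter_circle(1)[OF assms(4)] .
  have opt: "max_weight_subset g A K {k \<in> A. \<sigma> k \<in> R}"
  proof -
    have "max_weight_subset ((\<lambda>j. inner u (c j)) \<circ> \<sigma>) A K {k \<in> A. \<sigma> k \<in> R}"
      using assms by (intro max_weight_subset_reindex)
    moreover have "((\<lambda>j. inner u (c j)) \<circ> \<sigma>) k = g k" if "k \<in> A" for k
      using inner_eq_cos_type_angle[OF assms(4) c[OF that]] unfolding g_def by simp
    ultimately show ?thesis
      using max_weight_subset_cong by blast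
  qed
  have "strictly_quasiconcave_on A g"
  proof -
    have "type_angle (c (\<sigma> k)) \<in> {type_angle u - pi..type_angle u + pi}" if "k \<in> A" for k
      using c_angle[OF that] u by auto
    then have "(\<lambda>k. type_angle (c (\<sigma> k))) ` A \<subseteq> {type_angle u - pi..type_angle u + pi}"
      by blast
    then have "strictly_quasiconcave_on A ((\<lambda>s. cos (type_angle u - s)) \<circ> (\<lambda>k. type_angle (c (\<sigma> k))))"
      using strictly_quasiconcave_on_comp_strict_mono[OF strictly_quasiconcave_on_cos_diff] assms(6)
      by blast
    then show ?thesis unfolding g_def comp_def .
  qed
  moreover have "0 < g k" if "k \<in> A" for k
    using c_angle[OF that] u unfolding g_def by (intro cos_gt_zero_pi) auto
  ultimately show ?thesis
    using max_weight_subset_order_convex[OF assms(1,2) _ opt] max_weight_subset_card[OF assms(1,8) _ opt]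
    by blast
qed

lemma stay_set_angular_interval:
  assumes "K < C" "C < 2 * K" "U < 2 * abar"
    and u: "\<And>i. i \<in> {1..U} \<Longrightarrow> u i \<in> open_quarter_circle" and c: "c ` {1..C} \<subseteq> open_quarter_circle"
    and UC: "is_UC0 U C K u c UC" and \<sigma>: "bij_betw \<sigma> {1..C} {1..C}"
    and mono: "strict_mono_on {1..C} (\<lambda>k. type_angle (c (\<sigma> k)))"
  shows "\<exists>i\<in>{1..C}. \<exists>j\<in>{1..C}.
    {k \<in> {1..C}. \<sigma> k \<in> stay_set U C abar UC} = {i..j} \<and> j + 1 - i \<le> K"
proof -
  define W where "W i = {k \<in> {1..C}. \<sigma> k \<in> UC i}" for i
  have windows: "W i \<subseteq> {1..C} \<and> order_convex (W i) \<and> card (W i) = K" if i: "i \<in> {1..U}" for i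
  proof -
    have opt: "max_weight_subset (\<lambda>j. inner (u i) (c j)) {1..C} K (UC i)"
      using UC i unfolding is_UC0_iff_max_weight_subset by blast
    have "K \<le> card {1..C}" using \<open>K < C\<close> by simp
    then show ?thesis
      using order_convex_recommendation[OF finite_atLeastAtMost order_convex_atLeastAtMost \<sigma> u[OF i] c mono opt]
      unfolding W_def by blast
  qed
  have "\<sigma> k \<in> stay_set U C abar UC \<longleftrightarrow> abar \<le> card {i \<in> {1..U}. k \<in> W i}" if "k \<in> {1..C}" for k
    using bij_betwE[OF \<sigma>] that unfolding stay_set_def W_def by simp
  then have stay: "{k \<in> {1..C}. \<sigma> k \<in> stay_set U C abar UC}
      = {k \<in> {1..C}. abar \<le> card {i \<in> {1..U}. k \<in> W i}}"
    by blast
  have "card {1..U} < 2 * abar"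
    using \<open>U < 2 * abar\<close> by simp
  from superlevel_count_interval[OF finite_atLeastAtMost \<open>K < C\<close> \<open>C < 2 * K\<close> this windows]
  show ?thesis
    unfolding stay .
qed

theorem lemma12:
  fixes C K r U abar :: nat
  assumes "C < 2 * K" and "K < C" and "0 < r"
    and "U = r * C" and "abar = r * K"
  shows "AE \<omega> in (PiM {1..U} (\<lambda>_. arc_unif)) \<Otimes>\<^sub>M (PiM {1..C} (\<lambda>_. arc_unif)).
    \<forall>UC \<sigma>. is_UC0 U C K (fst \<omega>) (snd \<omega>) UC \<and> bij_betw \<sigma> {1..C} {1..C} \<and>
           strict_mono_on {1..C} (\<lambda>k. type_angle (snd \<omega> (\<sigma> k))) \<longrightarrow>
      (\<exists>i\<in>{1..C}. \<exists>j\<in>{1..C}.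
         {k \<in> {1..C}. \<sigma> k \<in> stay_set U C abar UC} = {i..j} \<and> j + 1 - i \<le> K)"
  using AE_types_open_quarter_circle[OF finite_atLeastAtMost finite_atLeastAtMost]
proof eventually_elim
  case (elim \<omega>)
  have "r * C < r * (2 * K)"
    using \<open>0 < r\<close> \<open>C < 2 * K\<close> by simp
  then have "U < 2 * abar"
    using assms by simp
  with elim assms show ?case
    using stay_set_angular_interval[where u = "fst \<omega>" and c = "snd \<omega>"] by blast
qed

end
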